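(* Let $p=\alpha(\alpha+1)>2$ with $\alpha>0$, let $c_p=\frac{1+z_p}{1-z_p}$, $a_p=h_{c_p}'(z_p)/L_\alpha'(z_p)$, and let $\ell_p$ be the tangent line to the graph of $h_{c_p}$ at $z_p$. Then $a_pL_\alpha$ and $h_{c_p}$ have the same value ($0$) and the same derivative at $z_p$, and on $[z_p,1]$ $$h_{c_p}\le \ell_p\le a_pL_\alpha ,$$ i.e. $\ell_p$ separates the graphs of $a_pL_\alpha$ and $h_{c_p}$ on $(z_p,1)$.
   Context: $L_\alpha$ is the solution on $(-1,1)$ of $(1-s^2)y''-2sy'+\alpha(\alpha+1)y=0$ bounded near $1$ with $L_\alpha(1)=1$ (i.e. ${}_2F_1(-\alpha,\alpha+1;1;\frac{1-s}{2})$); $z_p$ is its largest zero in $(-1,1)$; $h_c(s)=\big(\frac{1+s}{2}\big)^p-c^p\big(\frac{1-s}{2}\big)^p$. *)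

theory Defs
  imports "HOL-Analysis.Analysis"
begin

text \<open>The Legendre function L_alpha(s) = 2F1(-alpha, alpha+1; 1; (1-s)/2),
  given by its hypergeometric series (convergent for s in (-1,1]).\<close>
definition legendreL :: "real \<Rightarrow> real \<Rightarrow> real" where
  "legendreL \<alpha> s = (\<Sum>n. pochhammer (-\<alpha>) n * pochhammer (\<alpha> + 1) n
                          / (fact n)^2 * ((1 - s) / 2) ^ n)"

definition zp :: "real \<Rightarrow> real" where
  "zp \<alpha> = (GREATEST s. s \<in> {-1<..<1} \<and> legendreL \<alpha> s = 0)"

definition hc :: "real \<Rightarrow> real \<Rightarrow> real \<Rightarrow> real" where
  "hc p c s = ((1 + s) / 2) powr p - c powr p * ((1 - s) / 2) powr p"

end

theory Submission
  imports Defs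
begin

text \<open>
  The Legendre function L_alpha is the power series sum c_n t^n in t = (1-s)/2, which
  converges for |t| < 1 and satisfies the hypergeometric equation in the self-adjoint form
  (t(1-t)P')' = -alpha(alpha+1) P; in the variable s this is the Legendre equation
  (1-s^2)y'' - 2sy' + py = 0 with p = alpha(alpha+1).

  The qualitative part is proved for an arbitrary solution y of the Legendre equation on (-1,1]
  with y(1) > 0 (locale legendre_solution): a Sturm comparison with the supersolution
  (1+s)^(p-1) - const shows that for p > 2 there is a zero in [b,1), where
  b = 2 p^(-1/(p-1)) - 1; a largest zero z exists, and on [z,1) both y' and y'' are positive,
  so y lies above its tangent line at z.

  For h_c with c = (1+z)/(1-z) the two terms balance at z, so h_c(z) = 0, and the bound z \<ge> b gives
  h_c'(z)(1-z) \<ge> 1 = h_c(1).  Since h_c'' is nondecreasing, a tangent line lying above h_c at the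
  right endpoint lies above h_c on the whole interval.  Scaling L_alpha by a = h_c'(z)/L_alpha'(z)
  matches the slopes, and the two tangent inequalities combine into the theorem.
\<close>

lemma powr_pred_mult: "0 < x \<Longrightarrow> x powr (r - 1) * x = x powr r" for x r :: real
  by (simp add: powr_diff)

lemma tangent_below_of_convex:
  fixes f f' f'' :: "real \<Rightarrow> real"
  assumes s: "a \<le> s" "s \<le> b"
    and f_deriv: "\<And>x. a \<le> x \<Longrightarrow> x \<le> b \<Longrightarrow> DERIV f x :> f' x"
    and f_deriv2: "\<And>x. a \<le> x \<Longrightarrow> x < b \<Longrightarrow> DERIV f' x :> f'' x"
    and convex: "\<And>x. a < x \<Longrightarrow> x < b \<Longrightarrow> f'' x \<ge> 0"
  shows "f a + f' a * (s - a) \<le> f s"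
proof (cases "a = s")
  case False
  with s have "a < s" by simp
  define g where "g x = f x - f' a * (x - a)" for x
  have g_deriv: "DERIV g x :> f' x - f' a" if "a \<le> x" "x \<le> s" for x
    unfolding g_def using that s by (auto intro!: derivative_eq_intros f_deriv)
  obtain \<xi> where \<xi>: "a < \<xi>" "\<xi> < s" "g s - g a = (s - a) * (f' \<xi> - f' a)"
    using MVT2[OF \<open>a < s\<close> g_deriv] by blast
  obtain \<eta> where \<eta>: "a < \<eta>" "\<eta> < \<xi>" "f' \<xi> - f' a = (\<xi> - a) * f'' \<eta>"
    using MVT2[OF \<xi>(1), of f' f''] f_deriv2 \<xi> s by force
  have "f' \<xi> - f' a \<ge> 0"
    using \<eta> \<xi> s convex[of \<eta>] by simp
  with \<xi> have "g s - g a \<ge> 0" by simp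
  then show ?thesis by (simp add: g_def)
qed simp

lemma increasing_after_rise:
  fixes g g' :: "real \<Rightarrow> real"
  assumes t: "a < t1" "t1 < t2"
    and g_deriv: "\<And>x. a \<le> x \<Longrightarrow> x \<le> t2 \<Longrightarrow> DERIV g x :> g' x"
    and mono: "mono_on {a<..<t2} g'"
    and rise: "g a < g t1"
  shows "g t1 < g t2"
proof -
  obtain u1 where u1: "a < u1" "u1 < t1" "g t1 - g a = (t1 - a) * g' u1"
    using MVT2[OF t(1), of g g'] g_deriv t by force
  obtain u2 where u2: "t1 < u2" "u2 < t2" "g t2 - g t1 = (t2 - t1) * g' u2"
    using MVT2[OF t(2), of g g'] g_deriv t by force
  have "(t1 - a) * g' u1 > 0" using u1 rise by simp
  with u1 have "g' u1 > 0" by (simp add: zero_less_mult_iff)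
  moreover have "g' u1 \<le> g' u2"
    using mono_onD[OF mono, of u1 u2] u1 u2 t by simp
  ultimately have "(t2 - t1) * g' u2 > 0" using u2 by simp
  with u2 show ?thesis by simp
qed

text \<open>If h' is convex (h'' nondecreasing), a tangent line at a that lies above h at the endpoint b
  lies above h on all of [a,b]: otherwise h' would first rise above and then fall below h'(a),
  which a function with nondecreasing derivative cannot do.\<close>
lemma tangent_above_of_mono_deriv2:
  fixes h h' h'' :: "real \<Rightarrow> real"
  assumes ab: "a < b"
    and cont: "continuous_on {a..b} h"
    and h_deriv: "\<And>x. a \<le> x \<Longrightarrow> x < b \<Longrightarrow> DERIV h x :> h' x"
    and h_deriv2: "\<And>x. a \<le> x \<Longrightarrow> x < b \<Longrightarrow> DERIV h' x :> h'' x"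
    and mono: "mono_on {a<..<b} h''"
    and endpoint: "h b \<le> h a + h' a * (b - a)"
    and s: "a \<le> s" "s \<le> b"
  shows "h s \<le> h a + h' a * (s - a)"
proof (rule ccontr)
  assume contra: "\<not> ?thesis"
  define \<phi> where "\<phi> x = h a + h' a * (x - a) - h x" for x
  have neg: "\<phi> s < 0" using contra by (simp add: \<phi>_def)
  have "\<phi> a = 0" "\<phi> b \<ge> 0" using endpoint by (simp_all add: \<phi>_def)
  with neg s have as: "a < s" and sb: "s < b" by (auto simp: order.order_iff_strict)
  have \<phi>_deriv: "DERIV \<phi> x :> h' a - h' x" if "a \<le> x" "x < b" for x
    unfolding \<phi>_def by (auto intro!: derivative_eq_intros h_deriv that)
  obtain t1 where t1: "a < t1" "t1 < s" "\<phi> s - \<phi> a = (s - a) * (h' a - h' t1)"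
    using MVT2[OF as, of \<phi>] \<phi>_deriv sb by force
  with neg \<open>\<phi> a = 0\<close> as have rise: "h' a < h' t1"
    by (simp add: mult_less_0_iff)
  have "continuous_on {s..b} \<phi>"
    unfolding \<phi>_def using s by (intro continuous_intros continuous_on_subset[OF cont]) auto
  moreover have "\<phi> differentiable (at x)" if "s < x" "x < b" for x
    using \<phi>_deriv[of x] that as real_differentiable_def by force
  ultimately obtain l t2 where t2: "s < t2" "t2 < b" "DERIV \<phi> t2 :> l" "\<phi> b - \<phi> s = (b - s) * l"
    using MVT[OF sb] by blast
  have "l = h' a - h' t2"
    using DERIV_unique[OF t2(3) \<phi>_deriv] t2 as by simp
  with t2(4) neg \<open>\<phi> b \<ge> 0\<close> have "(b - s) * (h' a - h' t2) > 0"
    by simp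
  with sb have fall: "h' t2 < h' a"
    by (simp add: zero_less_mult_iff)
  have "h' t1 < h' t2"
  proof (rule increasing_after_rise[OF t1(1) _ _ _ rise])
    show "t1 < t2" using t1 t2 by simp
    show "DERIV h' x :> h'' x" if "a \<le> x" "x \<le> t2" for x
      using that t2 by (intro h_deriv2) auto
    show "mono_on {a<..<t2} h''"
      using t2 by (auto intro: mono_on_subset[OF mono])
  qed
  with rise fall show False by simp
qed

definition legendre_zero_bound :: "real \<Rightarrow> real" where
  "legendre_zero_bound p = 2 * p powr (-1 / (p - 1)) - 1"

lemma legendre_zero_bound:
  assumes "p > 1"
  shows "-1 < legendre_zero_bound p" "legendre_zero_bound p < 1"
    and "p * ((1 + legendre_zero_bound p) / 2) powr (p - 1) = 1"
proof -
  have half: "(1 + legendre_zero_bound p) / 2 = p powr (-1 / (p - 1))"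
    by (simp add: legendre_zero_bound_def)
  have "0 < p powr (-1 / (p - 1))"
    using assms by simp
  then show "-1 < legendre_zero_bound p"
    by (simp add: legendre_zero_bound_def)
  have "p powr (-1 / (p - 1)) < 1"
    using assms by (intro powr_less_one) (auto simp: field_simps)
  then show "legendre_zero_bound p < 1"
    using half by simp
  have "(p powr (-1 / (p - 1))) powr (p - 1) = p powr (-1)"
    using assms by (simp add: powr_powr)
  also have "\<dots> = 1 / p"
    using assms by (simp add: powr_minus_divide)
  finally have "(p powr (-1 / (p - 1))) powr (p - 1) = 1 / p" .
  then show "p * ((1 + legendre_zero_bound p) / 2) powr (p - 1) = 1"
    using half assms by simp
qed

text \<open>The Legendre operator applied to (1+s)^(p-1), written in w = 1+s, is
  e(w) = 2(p-1)^2 w^(p-2) - p(p-2) w^(p-1); it increases up to w = 2(p-1)/p and decreases after,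
  which gives a lower bound on any interval [w0,2].\<close>
lemma comparison_operator_bound:
  fixes p w0 w :: real
  assumes p: "p > 2" and w: "0 < w0" "w0 \<le> w" "w \<le> 2"
  shows "2 * (p-1)^2 * w powr (p-2) - p * (p-2) * w powr (p-1) \<ge> min (p * w0 powr (p-1)) (2 powr (p-1))"
proof -
  define e where "e x = 2 * (p-1)^2 * x powr (p-2) - p * (p-2) * x powr (p-1)" for x
  have e_2: "e 2 = 2 powr (p-1)"
    using powr_pred_mult[of 2 "p-1"] by (simp add: e_def power2_eq_square algebra_simps)
  show ?thesis
  proof (cases "p * w \<le> 2 * (p-1)")
    case True
    have "p * w * (p-1) \<le> 2 * (p-1) * (p-1)"
      using True p by (intro mult_right_mono) auto
    then have "p * w \<le> 2 * (p-1)^2 - p * (p-2) * w"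
      by (simp add: power2_eq_square algebra_simps)
    then have "w powr (p-2) * (p * w) \<le> w powr (p-2) * (2 * (p-1)^2 - p * (p-2) * w)"
      by (intro mult_left_mono) auto
    moreover have "w powr (p-1) = w powr (p-2) * w"
      using powr_pred_mult[of w "p-1"] w by simp
    moreover have "p * w0 powr (p-1) \<le> p * w powr (p-1)"
      using w p by (intro mult_left_mono powr_mono2) auto
    ultimately show ?thesis
      by (simp add: algebra_simps)
  next
    case False
    have "e 2 \<le> e w"
    proof (rule DERIV_nonpos_imp_nonincreasing[OF w(3)])
      fix x assume x: "w \<le> x" "x \<le> 2"
      then have "x > 0" using w by simp
      define d where "d = 2 * (p-1)^2 * ((p-2) * x powr (p-2-1)) - p * (p-2) * ((p-1) * x powr (p-1-1))"
      have "DERIV e x :> d"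
        unfolding e_def d_def using \<open>x > 0\<close> by (auto intro!: derivative_eq_intros)
      moreover have "d = (p-1) * (p-2) * x powr (p-3) * (2 * (p-1) - p * x)"
        using powr_pred_mult[OF \<open>x > 0\<close>, of "p-2"] by (simp add: d_def power2_eq_square algebra_simps)
      moreover have "p * w \<le> p * x"
        using x p by (intro mult_left_mono) auto
      with False have "2 * (p-1) - p * x \<le> 0" by linarith
      moreover have "0 \<le> (p-1) * (p-2) * x powr (p-3)"
        using p by simp
      ultimately show "\<exists>d. DERIV e x :> d \<and> d \<le> 0"
        by (metis mult_nonneg_nonpos)
    qed
    then show ?thesis
      using e_2 by (simp add: e_def)
  qed
qed

subsection \<open>The hypergeometric series of L_alpha\<close>

definition legendre_coeff :: "real \<Rightarrow> nat \<Rightarrow> real" where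
  "legendre_coeff \<alpha> n = pochhammer (-\<alpha>) n * pochhammer (\<alpha> + 1) n / (fact n)^2"

lemma legendre_coeff_Suc:
  "legendre_coeff \<alpha> (Suc n)
     = legendre_coeff \<alpha> n * ((real n - \<alpha>) * (real n + \<alpha> + 1) / (real n + 1)^2)"
  unfolding legendre_coeff_def pochhammer_Suc fact_Suc
  by (simp add: field_simps power2_eq_square of_nat_Suc)

text \<open>For n \<ge> |alpha| the ratio c_(n+1)/c_n lies in [0,1], so the series converges for |t| < 1
  by the ratio test.\<close>
lemma legendre_coeff_ratio_bounds:
  assumes "\<bar>\<alpha>\<bar> \<le> real n"
  shows "0 \<le> (real n - \<alpha>) * (real n + \<alpha> + 1) / (real n + 1)^2"
    and "(real n - \<alpha>) * (real n + \<alpha> + 1) / (real n + 1)^2 \<le> 1"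
proof -
  show "0 \<le> (real n - \<alpha>) * (real n + \<alpha> + 1) / (real n + 1)^2"
    using assms by (intro divide_nonneg_pos mult_nonneg_nonneg) auto
  have "(real n - \<alpha>) * (real n + \<alpha> + 1) = (real n + 1)^2 - (real n + 1) - (\<alpha> + 1/2)^2 + 1/4"
    by (simp add: power2_eq_square algebra_simps)
  also have "\<dots> \<le> (real n + 1)^2"
    using zero_le_power2[of "\<alpha> + 1/2"] by linarith
  finally show "(real n - \<alpha>) * (real n + \<alpha> + 1) / (real n + 1)^2 \<le> 1"
    by (simp add: divide_le_eq_1)
qed

lemma summable_legendre_series:
  assumes "norm t < 1"
  shows "summable (\<lambda>n. legendre_coeff \<alpha> n * t ^ n)"
proof (rule summable_ratio_test[OF assms, of "nat \<lceil>\<bar>\<alpha>\<bar>\<rceil>"])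
  fix n assume "nat \<lceil>\<bar>\<alpha>\<bar>\<rceil> \<le> n"
  then have "\<bar>\<alpha>\<bar> \<le> real n" by linarith
  define q where "q = (real n - \<alpha>) * (real n + \<alpha> + 1) / (real n + 1)^2"
  have q: "0 \<le> q" "q \<le> 1"
    using legendre_coeff_ratio_bounds[OF \<open>\<bar>\<alpha>\<bar> \<le> real n\<close>] by (simp_all add: q_def)
  have "norm (legendre_coeff \<alpha> (Suc n) * t ^ Suc n) = q * (norm t * norm (legendre_coeff \<alpha> n * t ^ n))"
    using q(1) by (simp add: legendre_coeff_Suc q_def[symmetric] abs_mult power_abs mult_ac)
  also have "\<dots> \<le> norm t * norm (legendre_coeff \<alpha> n * t ^ n)"
    using q by (intro mult_left_le_one_le) auto
  finally show "norm (legendre_coeff \<alpha> (Suc n) * t ^ Suc n) \<le> norm t * norm (legendre_coeff \<alpha> n * t ^ n)" .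
qed

definition legendre_series :: "real \<Rightarrow> real \<Rightarrow> real" where
  "legendre_series \<alpha> t = (\<Sum>n. legendre_coeff \<alpha> n * t ^ n)"

definition legendre_series' :: "real \<Rightarrow> real \<Rightarrow> real" where
  "legendre_series' \<alpha> t = (\<Sum>n. diffs (legendre_coeff \<alpha>) n * t ^ n)"

definition legendre_series'' :: "real \<Rightarrow> real \<Rightarrow> real" where
  "legendre_series'' \<alpha> t = (\<Sum>n. diffs (diffs (legendre_coeff \<alpha>)) n * t ^ n)"

lemma summable_legendre_series':
  "norm t < 1 \<Longrightarrow> summable (\<lambda>n. diffs (legendre_coeff \<alpha>) n * t ^ n)"
  by (rule termdiff_converges[where K = 1]) (auto intro: summable_legendre_series)

lemma legendre_series_has_deriv:
  "norm t < 1 \<Longrightarrow> DERIV (legendre_series \<alpha>) t :> legendre_series' \<alpha> t"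
  unfolding legendre_series_def legendre_series'_def
  by (rule termdiffs_strong'[where K = 1]) (auto intro: summable_legendre_series)

lemma legendre_series'_has_deriv:
  "norm t < 1 \<Longrightarrow> DERIV (legendre_series' \<alpha>) t :> legendre_series'' \<alpha> t"
  unfolding legendre_series'_def legendre_series''_def
  by (rule termdiffs_strong'[where K = 1]) (auto intro: summable_legendre_series')

text \<open>Coefficients of the flux t(1-t)P'(t).  Differentiating them termwise gives
  -alpha(alpha+1) c_n, i.e. the hypergeometric equation (t(1-t)P')' = -alpha(alpha+1) P.\<close>
definition legendre_flux_coeff :: "real \<Rightarrow> nat \<Rightarrow> real" where
  "legendre_flux_coeff \<alpha> n =
     (if n = 0 then 0 else real n * legendre_coeff \<alpha> n - real (n - 1) * legendre_coeff \<alpha> (n - 1))"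

lemma legendre_flux_sums:
  assumes "norm t < 1"
  shows "(\<lambda>n. legendre_flux_coeff \<alpha> n * t ^ n) sums (t * (1 - t) * legendre_series' \<alpha> t)"
proof -
  define f where "f n = real n * legendre_coeff \<alpha> n * t ^ n" for n
  define g where "g n = (if n = 0 then 0 else real (n - 1) * legendre_coeff \<alpha> (n - 1) * t ^ n)" for n
  have "(\<lambda>n. diffs (legendre_coeff \<alpha>) n * t ^ n) sums legendre_series' \<alpha> t"
    unfolding legendre_series'_def by (rule summable_sums[OF summable_legendre_series'[OF assms]])
  from sums_mult[OF this, of t]
  have "(\<lambda>n. f (Suc n)) sums (t * legendre_series' \<alpha> t)"
    by (simp add: f_def diffs_def mult_ac)
  then have f_sums: "f sums (t * legendre_series' \<alpha> t)"
    using sums_Suc_iff[of f] by (simp add: f_def)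
  from sums_mult[OF f_sums, of t]
  have "(\<lambda>n. g (Suc n)) sums (t * (t * legendre_series' \<alpha> t))"
    by (simp add: f_def g_def mult_ac)
  then have g_sums: "g sums (t * (t * legendre_series' \<alpha> t))"
    using sums_Suc_iff[of g] by (simp add: g_def)
  have "(\<lambda>n. f n - g n) = (\<lambda>n. legendre_flux_coeff \<alpha> n * t ^ n)"
    by (auto simp: f_def g_def legendre_flux_coeff_def algebra_simps)
  with sums_diff[OF f_sums g_sums] show ?thesis
    by (simp add: algebra_simps)
qed

lemma diffs_legendre_flux_coeff:
  "diffs (legendre_flux_coeff \<alpha>) n = - (\<alpha> * (\<alpha> + 1)) * legendre_coeff \<alpha> n"
proof -
  have "real (Suc n) * real (Suc n) * legendre_coeff \<alpha> (Suc n)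
      = legendre_coeff \<alpha> n * ((real n - \<alpha>) * (real n + \<alpha> + 1))"
    unfolding legendre_coeff_Suc of_nat_Suc
    by (simp add: power2_eq_square add.commute)
  then show ?thesis
    by (simp add: diffs_def legendre_flux_coeff_def algebra_simps)
qed

lemma legendre_flux_has_deriv:
  assumes "norm t < 1"
  shows "DERIV (\<lambda>t. t * (1 - t) * legendre_series' \<alpha> t) t :> - (\<alpha> * (\<alpha> + 1)) * legendre_series \<alpha> t"
proof -
  have flux_eq: "(\<Sum>n. legendre_flux_coeff \<alpha> n * x ^ n) = x * (1 - x) * legendre_series' \<alpha> x"
    if "norm x < 1" for x
    using legendre_flux_sums[OF that] by (rule sums_unique[symmetric])
  have "DERIV (\<lambda>x. \<Sum>n. legendre_flux_coeff \<alpha> n * x ^ n) t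
          :> (\<Sum>n. diffs (legendre_flux_coeff \<alpha>) n * t ^ n)"
    by (rule termdiffs_strong'[where K = 1])
       (use assms legendre_flux_sums sums_summable in blast)+
  also have "(\<Sum>n. diffs (legendre_flux_coeff \<alpha>) n * t ^ n) = - (\<alpha> * (\<alpha> + 1)) * legendre_series \<alpha> t"
    unfolding legendre_series_def diffs_legendre_flux_coeff mult.assoc
    by (rule suminf_mult[OF summable_legendre_series[OF assms]])
  finally show ?thesis
    by (rule has_field_derivative_transform_within_open[where S = "ball 0 1"])
       (use assms flux_eq in auto)
qed

definition legendreL' :: "real \<Rightarrow> real \<Rightarrow> real" where
  "legendreL' \<alpha> s = - legendre_series' \<alpha> ((1 - s) / 2) / 2"

definition legendreL'' :: "real \<Rightarrow> real \<Rightarrow> real" where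
  "legendreL'' \<alpha> s = legendre_series'' \<alpha> ((1 - s) / 2) / 4"

lemma legendreL_eq_series: "legendreL \<alpha> s = legendre_series \<alpha> ((1 - s) / 2)"
  by (simp add: legendreL_def legendre_series_def legendre_coeff_def)

lemma legendreL_at_1: "legendreL \<alpha> 1 = 1"
proof -
  have "legendre_coeff \<alpha> 0 = 1" by (simp add: legendre_coeff_def)
  then show ?thesis by (simp add: legendreL_eq_series legendre_series_def powser_zero)
qed

lemma legendreL_has_deriv:
  assumes "-1 < s" "s < 3"
  shows "DERIV (legendreL \<alpha>) s :> legendreL' \<alpha> s"
proof -
  have "DERIV (\<lambda>s. legendre_series \<alpha> ((1 - s) / 2)) s :> legendre_series' \<alpha> ((1 - s) / 2) * (-1/2)"
    by (rule DERIV_chain2[OF legendre_series_has_deriv]) (use assms in \<open>auto intro!: derivative_eq_intros\<close>)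
  then show ?thesis
    by (simp add: legendreL_eq_series[abs_def] legendreL'_def)
qed

lemma legendreL'_has_deriv:
  assumes "-1 < s" "s < 3"
  shows "DERIV (legendreL' \<alpha>) s :> legendreL'' \<alpha> s"
proof -
  have "DERIV (\<lambda>s. legendre_series' \<alpha> ((1 - s) / 2)) s :> legendre_series'' \<alpha> ((1 - s) / 2) * (-1/2)"
    by (rule DERIV_chain2[OF legendre_series'_has_deriv]) (use assms in \<open>auto intro!: derivative_eq_intros\<close>)
  from DERIV_cdivide[OF DERIV_minus[OF this], of 2] show ?thesis
    by (simp add: legendreL'_def[abs_def] legendreL''_def)
qed

text \<open>Legendre's equation for L_alpha, from the hypergeometric equation by t = (1-s)/2.\<close>
lemma legendreL_ode:
  assumes "-1 < s" "s < 3"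
  shows "(1 - s^2) * legendreL'' \<alpha> s - 2 * s * legendreL' \<alpha> s + \<alpha> * (\<alpha> + 1) * legendreL \<alpha> s = 0"
proof -
  define t where "t = (1 - s) / 2"
  have t: "norm t < 1" using assms by (auto simp: t_def)
  have "DERIV (\<lambda>t. t * (1 - t) * legendre_series' \<alpha> t) t
          :> (1 - 2 * t) * legendre_series' \<alpha> t + t * (1 - t) * legendre_series'' \<alpha> t"
    by (auto intro!: derivative_eq_intros legendre_series'_has_deriv[OF t] simp: algebra_simps)
  from DERIV_unique[OF this legendre_flux_has_deriv[OF t]]
  have ode_t: "t * (1 - t) * legendre_series'' \<alpha> t + (1 - 2 * t) * legendre_series' \<alpha> t
          + \<alpha> * (\<alpha> + 1) * legendre_series \<alpha> t = 0"
    by (simp add: algebra_simps)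
  have weight: "(1 - s^2) / 4 = t * (1 - t)" and slope: "s = 1 - 2 * t"
    by (simp_all add: t_def power2_eq_square field_simps)
  have "(1 - s^2) * legendreL'' \<alpha> s - 2 * s * legendreL' \<alpha> s + \<alpha> * (\<alpha> + 1) * legendreL \<alpha> s
      = (1 - s^2) / 4 * legendre_series'' \<alpha> t + s * legendre_series' \<alpha> t
        + \<alpha> * (\<alpha> + 1) * legendre_series \<alpha> t"
    by (simp add: legendreL_eq_series legendreL'_def legendreL''_def t_def[symmetric])
  also have "\<dots> = 0"
    unfolding weight using ode_t by (simp add: slope)
  finally show ?thesis .
qed

subsection \<open>Solutions of the Legendre equation after their largest zero\<close>

locale legendre_solution =
  fixes p :: real and y y' y'' :: "real \<Rightarrow> real"
  assumes has_deriv: "\<And>s. -1 < s \<Longrightarrow> s \<le> 1 \<Longrightarrow> DERIV y s :> y' s"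
    and has_deriv2: "\<And>s. -1 < s \<Longrightarrow> s \<le> 1 \<Longrightarrow> DERIV y' s :> y'' s"
    and ode: "\<And>s. -1 < s \<Longrightarrow> s \<le> 1 \<Longrightarrow> (1 - s^2) * y'' s - 2 * s * y' s + p * y s = 0"
    and pos_at_1: "y 1 > 0"

context legendre_solution
begin

lemma continuous_on_y: "-1 < a \<Longrightarrow> b \<le> 1 \<Longrightarrow> continuous_on {a..b} y"
  by (intro continuous_at_imp_continuous_on ballI DERIV_isCont[OF has_deriv]) auto

text \<open>Sturm comparison via the Wronskian W = (1 - s^2)(y' v - y v'): if v vanishes at a with
  positive slope and is a supersolution on [a,1], then y cannot stay positive on [a,1].\<close>
lemma sturm_comparison:
  fixes v v' v'' :: "real \<Rightarrow> real"
  assumes a: "-1 < a" "a < 1"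
    and v_deriv: "\<And>s. a \<le> s \<Longrightarrow> s \<le> 1 \<Longrightarrow> DERIV v s :> v' s"
    and v_deriv2: "\<And>s. a \<le> s \<Longrightarrow> s \<le> 1 \<Longrightarrow> DERIV v' s :> v'' s"
    and v_start: "v a = 0" "v' a > 0"
    and super: "\<And>s. a \<le> s \<Longrightarrow> s \<le> 1 \<Longrightarrow> (1 - s^2) * v'' s - 2 * s * v' s + p * v s \<ge> 0"
  shows "\<exists>s\<in>{a..1}. y s \<le> 0"
proof (rule ccontr)
  assume "\<not> ?thesis"
  then have y_pos: "y s > 0" if "a \<le> s" "s \<le> 1" for s
    using that by force
  define E where "E s = (1 - s^2) * v'' s - 2 * s * v' s + p * v s" for s
  define W where "W s = (1 - s^2) * (y' s * v s - y s * v' s)" for s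
  have W_deriv: "DERIV W s :> - y s * E s" if s: "a \<le> s" "s \<le> 1" for s
  proof -
    have "-1 < s" using s a by simp
    have "DERIV W s :> - 2 * s * (y' s * v s - y s * v' s)
            + (1 - s^2) * (y'' s * v s + y' s * v' s - (y' s * v' s + y s * v'' s))"
      unfolding W_def
      by (auto intro!: derivative_eq_intros has_deriv has_deriv2 v_deriv v_deriv2
          simp: \<open>-1 < s\<close> s power2_eq_square algebra_simps)
    moreover have "- 2 * s * (y' s * v s - y s * v' s)
            + (1 - s^2) * (y'' s * v s + y' s * v' s - (y' s * v' s + y s * v'' s))
        = v s * ((1 - s^2) * y'' s - 2 * s * y' s + p * y s) - y s * E s"
      by (simp add: E_def algebra_simps)
    ultimately show ?thesis
      using ode[OF \<open>-1 < s\<close> s(2)] by simp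
  qed
  obtain \<xi> where \<xi>: "a < \<xi>" "\<xi> < 1" "W 1 - W a = (1 - a) * (- y \<xi> * E \<xi>)"
    using MVT2[OF a(2) W_deriv] by blast
  have "(1 - a) * (y \<xi> * E \<xi>) \<ge> 0"
    using y_pos[of \<xi>] super[of \<xi>] \<xi> by (simp add: E_def)
  with \<xi> have "W 1 \<le> W a" by simp
  moreover have "W 1 = 0" by (simp add: W_def)
  moreover have "1 - a^2 > 0" using a by (simp add: abs_square_less_1)
  then have "W a < 0"
    using y_pos[of a] v_start a by (simp add: W_def mult_pos_neg)
  ultimately show False by simp
qed

text \<open>For p > 2 the solution has a zero in [b,1), where b is the zero bound: compare with the
  supersolution v(s) = (1+s)^(p-1) - (1+b)^(p-1), which vanishes at b.\<close>
lemma zero_above_bound: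
  assumes p: "p > 2"
  shows "\<exists>t. legendre_zero_bound p \<le> t \<and> t < 1 \<and> y t = 0"
proof -
  define b where "b = legendre_zero_bound p"
  have b: "-1 < b" "b < 1" "p * ((1 + b) / 2) powr (p - 1) = 1"
    using legendre_zero_bound[of p] p by (simp_all add: b_def)
  define K where "K = (1 + b) powr (p - 1)"
  have pK: "p * K = 2 powr (p - 1)"
  proof -
    have "K = (2 * ((1 + b) / 2)) powr (p - 1)"
      unfolding K_def by (rule arg_cong[where f = "\<lambda>x. x powr (p - 1)"]) simp
    also have "\<dots> = 2 powr (p - 1) * ((1 + b) / 2) powr (p - 1)"
      using b powr_mult[of 2 "(1 + b) / 2" "p - 1"] by linarith
    finally show ?thesis using b(3) by (simp add: algebra_simps)
  qed
  define v v' v'' where "v s = (1 + s) powr (p - 1) - K"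
    and "v' s = (p - 1) * (1 + s) powr (p - 2)"
    and "v'' s = (p - 1) * (p - 2) * (1 + s) powr (p - 3)" for s
  have v_deriv: "DERIV v s :> v' s" and v_deriv2: "DERIV v' s :> v'' s" if "-1 < s" for s
    using that unfolding v_def v'_def v''_def
    by (auto intro!: derivative_eq_intros simp: algebra_simps)
  have super: "(1 - s^2) * v'' s - 2 * s * v' s + p * v s \<ge> 0" if s: "b \<le> s" "s \<le> 1" for s
  proof -
    define w where "w = 1 + s"
    have w: "0 < w" "1 + b \<le> w" "w \<le> 2" using s b by (auto simp: w_def)
    have "w powr (p - 2) = w powr (p - 3) * w" "w powr (p - 1) = w powr (p - 3) * w * w"
      using powr_pred_mult[OF w(1), of "p - 2"] powr_pred_mult[OF w(1), of "p - 1"] by simp_all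
    then have "(1 - s^2) * v'' s - 2 * s * v' s + p * v s
        = 2 * (p-1)^2 * w powr (p-2) - p * (p-2) * w powr (p-1) - p * K"
      unfolding v_def v'_def v''_def w_def[symmetric]
      by (simp add: w_def power2_eq_square algebra_simps)
    moreover have "min (p * (1 + b) powr (p-1)) (2 powr (p-1)) = p * K"
      using pK by (simp add: K_def)
    ultimately show ?thesis
      using comparison_operator_bound[OF p _ w(2,3)] b(1) by simp
  qed
  have "v b = 0" "v' b > 0"
    using b p by (simp_all add: v_def v'_def K_def)
  then obtain t where t: "b \<le> t" "t \<le> 1" "y t \<le> 0"
    using sturm_comparison[OF b(1,2) v_deriv v_deriv2 _ _ super] b(1) by force
  then obtain x where x: "t \<le> x" "x \<le> 1" "y x = 0"
    using IVT'[of y t 0 1] pos_at_1 continuous_on_y[of t 1] b(1) by force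
  moreover have "x \<noteq> 1" using x pos_at_1 by auto
  ultimately show ?thesis
    using t by (intro exI[of _ x]) (auto simp: b_def)
qed

lemma largest_zero:
  assumes t0: "-1 < t0" "t0 \<le> 1" "y t0 = 0"
  obtains z where "t0 \<le> z" "z < 1" "y z = 0" "\<And>x. z < x \<Longrightarrow> x \<le> 1 \<Longrightarrow> y x > 0"
proof -
  define T where "T = {x \<in> {t0..1}. y x = 0}"
  have "closed T"
    unfolding T_def using continuous_on_y[OF t0(1) order.refl]
    by (rule continuous_closed_preimage_constant) simp
  moreover have "bounded T"
    by (rule bounded_subset[of "{t0..1}"]) (auto simp: T_def)
  moreover have "t0 \<in> T"
    using t0 pos_at_1 by (auto simp: T_def)
  ultimately obtain z where z: "z \<in> T" "\<And>x. x \<in> T \<Longrightarrow> x \<le> z"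
    using compact_attains_sup[of T] by (auto simp: compact_eq_bounded_closed)
  have z_range: "t0 \<le> z" "z \<le> 1" "y z = 0"
    using z(1) by (auto simp: T_def)
  have pos: "y x > 0" if x: "z < x" "x \<le> 1" for x
  proof (rule ccontr)
    assume "\<not> y x > 0"
    then obtain u where u: "x \<le> u" "u \<le> 1" "y u = 0"
      using IVT'[of y x 0 1] x pos_at_1 continuous_on_y[of x 1] z_range t0 by force
    then have "u \<in> T" using x z_range by (auto simp: T_def)
    with z(2) u x show False by force
  qed
  have "z \<noteq> 1" using z_range pos_at_1 by auto
  with z_range pos show ?thesis
    by (intro that) auto
qed

context
  fixes z :: real
  assumes last_zero: "-1 < z" "y z = 0" "\<And>x. z < x \<Longrightarrow> x \<le> 1 \<Longrightarrow> y x > 0"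
begin

text \<open>Integrating ((1 - s^2) y')' = -p y from s to 1 shows that y increases after its last zero.\<close>
lemma deriv_pos_after_last_zero:
  assumes p: "p > 0" and s: "z \<le> s" "s < 1"
  shows "y' s > 0"
proof -
  define W where "W x = (1 - x^2) * y' x" for x
  have W_deriv: "DERIV W x :> - p * y x" if "s \<le> x" "x \<le> 1" for x
  proof -
    have x: "-1 < x" "x \<le> 1" using that s last_zero by auto
    have "DERIV W x :> - (2 * x) * y' x + (1 - x^2) * y'' x"
      unfolding W_def
      by (auto intro!: derivative_eq_intros has_deriv[OF x] has_deriv2[OF x] simp: power2_eq_square)
    moreover have "- (2 * x) * y' x + (1 - x^2) * y'' x = - p * y x"
      using ode[OF x] by (simp add: algebra_simps)
    ultimately show ?thesis by simp
  qed
  obtain \<xi> where \<xi>: "s < \<xi>" "\<xi> < 1" "W 1 - W s = (1 - s) * (- p * y \<xi>)"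
    using MVT2[OF s(2) W_deriv] by blast
  have "y \<xi> > 0" using last_zero(3) \<xi> s by simp
  with \<xi> p have "W s > 0"
    by (simp add: W_def mult_pos_pos)
  moreover have "1 - s^2 > 0" using s last_zero by (simp add: abs_square_less_1)
  ultimately show ?thesis by (simp add: W_def zero_less_mult_iff)
qed

text \<open>For p > 2 the quantity (2 s y' - p y)(1 - s^2) decreases on [z,1] and vanishes at 1, so it is
  positive before 1; by the equation it equals (1 - s^2)^2 y'', hence y is convex after z.\<close>
lemma deriv2_pos_after_last_zero:
  assumes p: "p > 2" and s: "z \<le> s" "s < 1"
  shows "y'' s > 0"
proof -
  define f where "f x = (2 * x * y' x - p * y x) * (1 - x^2)" for x
  have f_deriv: "DERIV f x :> (2 - p) * (1 - x^2) * y' x" if "s \<le> x" "x \<le> 1" for x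
  proof -
    have x: "-1 < x" "x \<le> 1" using that s last_zero by auto
    have "DERIV f x :> (2 * y' x + 2 * x * y'' x - p * y' x) * (1 - x^2) + (2 * x * y' x - p * y x) * (- (2 * x))"
      unfolding f_def
      by (auto intro!: derivative_eq_intros has_deriv[OF x] has_deriv2[OF x] simp: power2_eq_square algebra_simps)
    moreover have "(2 * y' x + 2 * x * y'' x - p * y' x) * (1 - x^2) + (2 * x * y' x - p * y x) * (- (2 * x))
        = (2 - p) * (1 - x^2) * y' x + 2 * x * ((1 - x^2) * y'' x - 2 * x * y' x + p * y x)"
      by (simp add: power2_eq_square algebra_simps)
    ultimately show ?thesis
      using ode[OF x] by simp
  qed
  obtain \<xi> where \<xi>: "s < \<xi>" "\<xi> < 1" "f 1 - f s = (1 - s) * ((2 - p) * (1 - \<xi>^2) * y' \<xi>)"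
    using MVT2[OF s(2) f_deriv] by blast
  have "y' \<xi> > 0" "1 - \<xi>^2 > 0"
    using deriv_pos_after_last_zero[of \<xi>] p \<xi> s last_zero by (auto simp: abs_square_less_1)
  with p have "(2 - p) * (1 - \<xi>^2) * y' \<xi> < 0"
    by (intro mult_neg_pos) auto
  with s have "(1 - s) * ((2 - p) * (1 - \<xi>^2) * y' \<xi>) < 0"
    by (rule_tac mult_pos_neg) auto
  with \<xi>(3) have "f s > 0"
    by (simp add: f_def)
  moreover have s2: "1 - s^2 > 0" using s last_zero by (simp add: abs_square_less_1)
  ultimately have "2 * s * y' s - p * y s > 0"
    by (simp add: f_def zero_less_mult_iff)
  moreover have "(1 - s^2) * y'' s = 2 * s * y' s - p * y s"
    using ode[of s] s last_zero(1) by simp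
  ultimately have "(1 - s^2) * y'' s > 0" by linarith
  with s2 show ?thesis by (simp add: zero_less_mult_iff)
qed

lemma tangent_below_after_last_zero:
  assumes p: "p > 2" and s: "z \<le> s" "s \<le> 1"
  shows "y' z * (s - z) \<le> y s"
proof -
  have "y z + y' z * (s - z) \<le> y s"
  proof (rule tangent_below_of_convex[OF s])
    fix x assume "z \<le> x" "x \<le> 1"
    then show "DERIV y x :> y' x" using last_zero(1) by (intro has_deriv) auto
  next
    fix x assume "z \<le> x" "x < 1"
    then show "DERIV y' x :> y'' x" using last_zero(1) by (intro has_deriv2) auto
  next
    fix x assume "z < x" "x < 1"
    then show "y'' x \<ge> 0" using deriv2_pos_after_last_zero[OF p, of x] by simp
  qed
  then show ?thesis using last_zero(2) by simp
qed

end

end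

lemma legendreL_solution:
  "legendre_solution (\<alpha> * (\<alpha> + 1)) (legendreL \<alpha>) (legendreL' \<alpha>) (legendreL'' \<alpha>)"
  by unfold_locales (simp_all add: legendreL_has_deriv legendreL'_has_deriv legendreL_ode legendreL_at_1)

subsection \<open>The comparison function h_c\<close>

definition hc' :: "real \<Rightarrow> real \<Rightarrow> real \<Rightarrow> real" where
  "hc' p c s = p / 2 * (((1 + s) / 2) powr (p - 1) + c powr p * ((1 - s) / 2) powr (p - 1))"

definition hc'' :: "real \<Rightarrow> real \<Rightarrow> real \<Rightarrow> real" where
  "hc'' p c s = p * (p - 1) / 4 * (((1 + s) / 2) powr (p - 2) - c powr p * ((1 - s) / 2) powr (p - 2))"

lemma hc_has_deriv: "-1 < s \<Longrightarrow> s < 1 \<Longrightarrow> DERIV (hc p c) s :> hc' p c s"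
  unfolding hc_def[abs_def] hc'_def by (auto intro!: derivative_eq_intros simp: algebra_simps)

lemma hc'_has_deriv: "-1 < s \<Longrightarrow> s < 1 \<Longrightarrow> DERIV (hc' p c) s :> hc'' p c s"
  unfolding hc'_def[abs_def] hc''_def by (auto intro!: derivative_eq_intros simp: field_simps)

text \<open>For p \<ge> 2 both terms of h_c'' are nondecreasing, so h_c' is convex.\<close>
lemma hc''_mono:
  assumes "p \<ge> 2"
  shows "mono_on {-1<..<1} (hc'' p c)"
proof (rule mono_onI)
  fix r s :: real assume "r \<in> {-1<..<1}" "s \<in> {-1<..<1}" "r \<le> s"
  then have "((1 + r) / 2) powr (p - 2) \<le> ((1 + s) / 2) powr (p - 2)"
    and "((1 - s) / 2) powr (p - 2) \<le> ((1 - r) / 2) powr (p - 2)"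
    using assms by (auto intro!: powr_mono2)
  then have "c powr p * ((1 - s) / 2) powr (p - 2) \<le> c powr p * ((1 - r) / 2) powr (p - 2)"
    by (intro mult_left_mono) auto
  with \<open>((1 + r) / 2) powr (p - 2) \<le> ((1 + s) / 2) powr (p - 2)\<close> assms
  show "hc'' p c r \<le> hc'' p c s"
    unfolding hc''_def by (intro mult_left_mono) auto
qed

lemma hc_at_1: "hc p c 1 = 1"
  by (simp add: hc_def)

lemma continuous_on_hc:
  assumes "p > 0" "-1 < z"
  shows "continuous_on {z..1} (hc p c)"
proof -
  have plus: "continuous_on {z..1} (\<lambda>s. ((1 + s) / 2) powr p)"
    by (rule continuous_on_powr) (use assms in \<open>auto intro!: continuous_intros\<close>)
  have minus: "continuous_on {z..1} (\<lambda>s. ((1 - s) / 2) powr p)"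
    by (rule continuous_on_powr') (use assms in \<open>auto intro!: continuous_intros\<close>)
  show ?thesis
    unfolding hc_def[abs_def] by (intro continuous_on_diff continuous_on_mult_left plus minus)
qed

lemma hc_balanced:
  assumes z: "-1 < z" "z < 1" and c: "c = (1 + z) / (1 - z)"
  shows "hc p c z = 0" "hc' p c z * (1 - z) = p * ((1 + z) / 2) powr (p - 1)"
proof -
  define A B where "A = (1 + z) / 2" and "B = (1 - z) / 2"
  have pos: "A > 0" "B > 0" "c > 0" using z by (simp_all add: A_def B_def c)
  have cB: "c * B = A" using z by (simp add: c A_def B_def field_simps)
  have "c powr p * B powr p = A powr p"
    using pos by (simp add: powr_mult[symmetric] cB)
  then show "hc p c z = 0"
    by (simp add: hc_def A_def B_def)
  have "c powr p = c * c powr (p - 1)"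
    using powr_pred_mult[OF pos(3), of p] by (simp add: mult.commute)
  moreover have "c powr (p - 1) * B powr (p - 1) = A powr (p - 1)"
    using pos by (simp add: powr_mult[symmetric] cB)
  ultimately have "c powr p * B powr (p - 1) = c * A powr (p - 1)"
    by (simp add: mult.assoc)
  then have "hc' p c z = p / 2 * A powr (p - 1) * (1 + c)"
    by (simp add: hc'_def A_def[symmetric] B_def[symmetric] algebra_simps)
  then have "hc' p c z * (1 - z) = p / 2 * A powr (p - 1) * ((1 + c) * (1 - z))"
    by (simp only: mult.assoc)
  also have "(1 + c) * (1 - z) = 2"
    using z by (simp add: c field_simps)
  finally show "hc' p c z * (1 - z) = p * ((1 + z) / 2) powr (p - 1)"
    by (simp add: A_def)
qed

text \<open>If the balance point z lies above the zero bound, then h_c'(z)(1 - z) \<ge> 1 = h_c(1), so the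
  tangent at z passes above h_c(1), and by convexity of h_c' it stays above h_c on [z,1].\<close>
lemma hc_below_tangent:
  assumes p: "p > 2" and z: "legendre_zero_bound p \<le> z" "z < 1" and c: "c = (1 + z) / (1 - z)"
  shows "hc' p c z > 0" "\<And>s. z \<le> s \<Longrightarrow> s \<le> 1 \<Longrightarrow> hc p c s \<le> hc p c z + hc' p c z * (s - z)"
proof -
  have bound: "-1 < legendre_zero_bound p" "p * ((1 + legendre_zero_bound p) / 2) powr (p - 1) = 1"
    using legendre_zero_bound[of p] p by auto
  with z have "-1 < z" by simp
  note balanced = hc_balanced[OF \<open>-1 < z\<close> z(2) c]
  have "((1 + legendre_zero_bound p) / 2) powr (p - 1) \<le> ((1 + z) / 2) powr (p - 1)"
    using bound z p by (intro powr_mono2) auto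
  then have "1 \<le> p * ((1 + z) / 2) powr (p - 1)"
    using bound(2) p by (metis mult_left_mono less_imp_le less_trans zero_less_numeral)
  then have slope: "1 \<le> hc' p c z * (1 - z)"
    using balanced(2) by simp
  show "hc' p c z > 0"
  proof (rule ccontr)
    assume "\<not> hc' p c z > 0"
    then have "hc' p c z * (1 - z) \<le> 0"
      using z by (intro mult_nonpos_nonneg) auto
    with slope show False by simp
  qed
  fix s assume s: "z \<le> s" "s \<le> 1"
  show "hc p c s \<le> hc p c z + hc' p c z * (s - z)"
  proof (rule tangent_above_of_mono_deriv2[OF z(2) _ _ _ _ _ s])
    show "continuous_on {z..1} (hc p c)"
      using continuous_on_hc[of p z c] p \<open>-1 < z\<close> by simp
    show "\<And>x. z \<le> x \<Longrightarrow> x < 1 \<Longrightarrow> DERIV (hc p c) x :> hc' p c x"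
      using \<open>-1 < z\<close> by (intro hc_has_deriv) auto
    show "\<And>x. z \<le> x \<Longrightarrow> x < 1 \<Longrightarrow> DERIV (hc' p c) x :> hc'' p c x"
      using \<open>-1 < z\<close> by (intro hc'_has_deriv) auto
    show "mono_on {z<..<1} (hc'' p c)"
      using hc''_mono[of p c] p \<open>-1 < z\<close> by (auto intro: mono_on_subset)
    show "hc p c 1 \<le> hc p c z + hc' p c z * (1 - z)"
      using slope balanced(1) by (simp add: hc_at_1)
  qed
qed

lemma zp_legendreL:
  assumes p: "p = \<alpha> * (\<alpha> + 1)" "p > 2"
  shows "legendre_zero_bound p \<le> zp \<alpha>" "zp \<alpha> < 1" "legendreL \<alpha> (zp \<alpha>) = 0"
    and "legendreL' \<alpha> (zp \<alpha>) > 0"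
    and "\<And>s. zp \<alpha> \<le> s \<Longrightarrow> s \<le> 1 \<Longrightarrow> legendreL' \<alpha> (zp \<alpha>) * (s - zp \<alpha>) \<le> legendreL \<alpha> s"
proof -
  interpret legendre_solution p "legendreL \<alpha>" "legendreL' \<alpha>" "legendreL'' \<alpha>"
    unfolding p(1) by (rule legendreL_solution)
  obtain t0 where t0: "legendre_zero_bound p \<le> t0" "t0 < 1" "legendreL \<alpha> t0 = 0"
    using zero_above_bound p(2) by blast
  have "-1 < t0" using legendre_zero_bound(1)[of p] p(2) t0(1) by simp
  obtain z where z: "t0 \<le> z" "z < 1" "legendreL \<alpha> z = 0"
    and right_pos: "\<And>x. z < x \<Longrightarrow> x \<le> 1 \<Longrightarrow> legendreL \<alpha> x > 0"
    by (rule largest_zero[OF \<open>-1 < t0\<close> less_imp_le[OF t0(2)] t0(3)]) blast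
  have "-1 < z" using \<open>-1 < t0\<close> z(1) by simp
  have zp_eq: "zp \<alpha> = z"
    unfolding zp_def
  proof (rule Greatest_equality)
    show "z \<in> {-1<..<1} \<and> legendreL \<alpha> z = 0" using z \<open>-1 < z\<close> by simp
    show "x \<le> z" if x: "x \<in> {-1<..<1} \<and> legendreL \<alpha> x = 0" for x
    proof (rule ccontr)
      assume "\<not> x \<le> z"
      with x have "legendreL \<alpha> x > 0" by (intro right_pos) auto
      with x show False by simp
    qed
  qed
  note last_zero = \<open>-1 < z\<close> z(3) right_pos
  show "legendre_zero_bound p \<le> zp \<alpha>" "zp \<alpha> < 1" "legendreL \<alpha> (zp \<alpha>) = 0"
    using zp_eq t0(1) z by simp_all
  show "legendreL' \<alpha> (zp \<alpha>) > 0"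
    using zp_eq deriv_pos_after_last_zero[OF last_zero _ order.refl z(2)] p(2) by simp
  show "legendreL' \<alpha> (zp \<alpha>) * (s - zp \<alpha>) \<le> legendreL \<alpha> s" if "zp \<alpha> \<le> s" "s \<le> 1" for s
    using zp_eq tangent_below_after_last_zero[OF last_zero p(2)] that by simp
qed

theorem lemma5p5:
  fixes \<alpha> p z c a :: real
  assumes "\<alpha> > 0" and "p = \<alpha> * (\<alpha> + 1)" and "p > 2"
    and "z = zp \<alpha>"
    and "c = (1 + z) / (1 - z)"
    and "a = deriv (hc p c) z / deriv (legendreL \<alpha>) z"
  shows "z \<in> {-1<..<1} \<and> legendreL \<alpha> z = 0
     \<and> a * legendreL \<alpha> z = 0 \<and> hc p c z = 0
     \<and> legendreL \<alpha> differentiable (at z) \<and> hc p c differentiable (at z)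
     \<and> deriv (\<lambda>s. a * legendreL \<alpha> s) z = deriv (hc p c) z
     \<and> (\<forall>s\<in>{z..1}. hc p c s \<le> hc p c z + deriv (hc p c) z * (s - z)
                   \<and> hc p c z + deriv (hc p c) z * (s - z) \<le> a * legendreL \<alpha> s)"
proof -
  note L = zp_legendreL[OF assms(2,3), folded assms(4)]
  have z: "-1 < z" "z < 1"
    using L(1,2) legendre_zero_bound(1)[of p] assms(3) by auto
  note H = hc_below_tangent[OF assms(3) L(1,2) assms(5)]
  have DL: "DERIV (legendreL \<alpha>) z :> legendreL' \<alpha> z"
    using z by (intro legendreL_has_deriv) auto
  have Dh: "DERIV (hc p c) z :> hc' p c z"
    using z by (rule hc_has_deriv)
  have slopes: "a * legendreL' \<alpha> z = hc' p c z"
    using assms(6) L(4) by (simp add: DERIV_imp_deriv[OF DL] DERIV_imp_deriv[OF Dh])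
  have "a > 0"
    using slopes L(4) H(1) by (metis zero_less_mult_pos2)
  have hz: "hc p c z = 0"
    using hc_balanced(1)[OF z assms(5)] .
  have tangents: "hc p c s \<le> hc p c z + hc' p c z * (s - z)
      \<and> hc p c z + hc' p c z * (s - z) \<le> a * legendreL \<alpha> s" if "s \<in> {z..1}" for s
  proof
    show "hc p c s \<le> hc p c z + hc' p c z * (s - z)"
      using H(2)[of s] that by simp
    have "a * (legendreL' \<alpha> z * (s - z)) \<le> a * legendreL \<alpha> s"
      using L(5)[of s] that \<open>a > 0\<close> by (intro mult_left_mono) auto
    then show "hc p c z + hc' p c z * (s - z) \<le> a * legendreL \<alpha> s"
      by (simp add: hz flip: slopes mult.assoc)
  qed
  have "DERIV (\<lambda>s. a * legendreL \<alpha> s) z :> hc' p c z"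
    using DERIV_cmult[OF DL, of a] slopes by simp
  then have "deriv (\<lambda>s. a * legendreL \<alpha> s) z = deriv (hc p c) z"
    using DERIV_imp_deriv[OF Dh] by (simp add: DERIV_imp_deriv)
  moreover have "legendreL \<alpha> differentiable (at z)" "hc p c differentiable (at z)"
    using DL Dh real_differentiable_def by blast+
  ultimately show ?thesis
    using z L(3) hz tangents by (simp add: DERIV_imp_deriv[OF Dh])
qed

end
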